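(* Let $m\ge 2$, $k=2$ (the Bradley--Terry paired comparison model) and $\pi\in\mathbb{R}^m_{>0}$. Then the Lagrangian dual of the problem of minimizing $-\log\det M^{(m)}(\xi)$ over designs $\xi\in\Delta_{\binom{m}{2}}$ simplifies to \[\text{maximize}\quad \log\det\begin{pmatrix}0&-\mathbf{1}^T\\ \mathbf{1}&-\frac{\Gamma(\xi)}{2}\end{pmatrix}\quad\text{subject to } \Gamma(\xi)\le\overline{\Gamma},\] over $\Gamma(\xi)\in\mathcal{C}^m$, where the inequality is entrywise and $\overline{\Gamma}$ is the symmetric $m\times m$ matrix with zero diagonal and $\overline{\Gamma}_{uv}=(m-1)/\lambda_{uv}$ for $u\neq v$, i.e. $\vec{\overline{\Gamma}}=(m-1)L^{-1}R\mathbf{1}$.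
   Context: Bradley--Terry model: alternatives $[m]$ with parameters $\pi_i>0$; choice sets are all pairs $\{u,v\}$, $u<v$, ordered lexicographically; in pair $\{u,v\}$, $u$ is chosen with probability $\pi_u/(\pi_u+\pi_v)$. A design is $\xi=(w_{uv})_{u<v}\in\Delta_{\binom{m}{2}}=\{\xi\ge0:\sum w_{uv}=1\}$. Let $\lambda_{uv}=\pi_u\pi_v/(\pi_u+\pi_v)^2$. The information matrix $M(\xi)$ is the Laplacian of the complete graph on $[m]$ with edge weights $\lambda_{uv}w_{uv}$, i.e. $M_{uv}=-\lambda_{uv}w_{uv}$ for $u\ne v$ and zero row sums; $M^{(m)}(\xi)$ deletes the $m$-th row and column. $\Gamma(\xi)$ is the Farris transform of $\Sigma=M^{(m)}(\xi)^{-1}$: $\Gamma_{uv}=\Sigma_{uu}+\Sigma_{vv}-2\Sigma_{uv}$ for $u,v<m$, $\Gamma_{um}=\Gamma_{mu}=\Sigma_{uu}$, $\Gamma_{mm}=0$. $\mathcal{C}^m$ is the cone of conditionally negative definite symmetric $m\times m$ matrices with zero diagonal. $R=\mathrm{diag}((\pi_u+\pi_v)^2)_{u<v}$, $L=\mathrm{diag}(\pi_u\pi_v)_{u<v}$, and $\vec{\,\cdot\,}$ vectorizes the off-diagonal upper-triangular entries in lexicographic order. *)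

theory Defs
  imports Complex_Main "HOL-Library.Extended_Real" "Jordan_Normal_Form.Determinant" "Jordan_Normal_Form.Gauss_Jordan_Elimination"
begin

text \<open>Conventions: alternatives are indexed 0,...,m-1; the "m-th" alternative of the
paper is index m-1.  A design is a function w with w u v the weight of the pair {u,v},
u < v < m (values outside these pairs are irrelevant).\<close>

definition pairs :: "nat \<Rightarrow> (nat \<times> nat) set" where
  "pairs m = {(u, v). u < v \<and> v < m}"

definition designs :: "nat \<Rightarrow> (nat \<Rightarrow> nat \<Rightarrow> real) set" where
  "designs m = {w. (\<forall>(u, v) \<in> pairs m. w u v \<ge> 0) \<and> (\<Sum>(u, v) \<in> pairs m. w u v) = 1}"

definition bt_lambda :: "(nat \<Rightarrow> real) \<Rightarrow> nat \<Rightarrow> nat \<Rightarrow> real" where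
  "bt_lambda \<pi> u v = \<pi> u * \<pi> v / (\<pi> u + \<pi> v)^2"

definition symw :: "(nat \<Rightarrow> nat \<Rightarrow> real) \<Rightarrow> nat \<Rightarrow> nat \<Rightarrow> real" where
  "symw w i j = (if i < j then w i j else w j i)"

text \<open>Information matrix M(xi): Laplacian of the complete graph on m vertices with
edge weights lambda_uv w_uv.\<close>
definition info_mat :: "nat \<Rightarrow> (nat \<Rightarrow> real) \<Rightarrow> (nat \<Rightarrow> nat \<Rightarrow> real) \<Rightarrow> real mat" where
  "info_mat m \<pi> w = mat m m (\<lambda>(i, j).
     if i = j then (\<Sum>k \<in> {..<m} - {i}. bt_lambda \<pi> i k * symw w i k)
     else - bt_lambda \<pi> i j * symw w i j)"

definition red_info_mat :: "nat \<Rightarrow> (nat \<Rightarrow> real) \<Rightarrow> (nat \<Rightarrow> nat \<Rightarrow> real) \<Rightarrow> real mat" where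
  "red_info_mat m \<pi> w = mat (m - 1) (m - 1) (\<lambda>(i, j). info_mat m \<pi> w $$ (i, j))"

definition mtrace :: "real mat \<Rightarrow> real" where
  "mtrace A = (\<Sum>i < dim_row A. A $$ (i, i))"

definition sym_mats :: "nat \<Rightarrow> real mat set" where
  "sym_mats n = {A \<in> carrier_mat n n. transpose_mat A = A}"

definition pd_mats :: "nat \<Rightarrow> real mat set" where
  "pd_mats n = {A \<in> sym_mats n. \<forall>x \<in> carrier_vec n. x \<noteq> 0\<^sub>v n \<longrightarrow> x \<bullet> (A *\<^sub>v x) > 0}"

definition logdet :: "real mat \<Rightarrow> ereal" where
  "logdet A = (if det A > 0 then ereal (ln (det A)) else -\<infinity>)"

text \<open>Lagrangian of the primal problem
  minimize -log det X  subject to  X = M^(m)(xi), sum w = 1, w >= 0,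
with X ranging over positive definite (m-1)x(m-1) matrices; multipliers:
Z (symmetric) for X = M^(m)(xi), nu for sum w = 1, mu >= 0 for -w <= 0.\<close>
definition lagrangian ::
  "nat \<Rightarrow> (nat \<Rightarrow> real) \<Rightarrow> (nat \<Rightarrow> nat \<Rightarrow> real) \<Rightarrow> real mat \<Rightarrow> real mat \<Rightarrow> real
     \<Rightarrow> (nat \<Rightarrow> nat \<Rightarrow> real) \<Rightarrow> real" where
  "lagrangian m \<pi> w X Z \<nu> \<mu> =
     - ln (det X) + mtrace (Z * (X - red_info_mat m \<pi> w))
     + \<nu> * ((\<Sum>(u, v) \<in> pairs m. w u v) - 1)
     - (\<Sum>(u, v) \<in> pairs m. \<mu> u v * w u v)"

definition dual_function ::
  "nat \<Rightarrow> (nat \<Rightarrow> real) \<Rightarrow> real mat \<Rightarrow> real \<Rightarrow> (nat \<Rightarrow> nat \<Rightarrow> real) \<Rightarrow> ereal" where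
  "dual_function m \<pi> Z \<nu> \<mu> =
     (INF wX \<in> UNIV \<times> pd_mats (m - 1). ereal (lagrangian m \<pi> (fst wX) (snd wX) Z \<nu> \<mu>))"

definition lagrange_dual_value :: "nat \<Rightarrow> (nat \<Rightarrow> real) \<Rightarrow> ereal" where
  "lagrange_dual_value m \<pi> =
     (SUP d \<in> {(Z, \<nu>, \<mu>). Z \<in> sym_mats (m - 1) \<and> (\<forall>(u, v) \<in> pairs m. \<mu> u v \<ge> 0)}.
        dual_function m \<pi> (fst d) (fst (snd d)) (snd (snd d)))"

definition farris :: "nat \<Rightarrow> real mat \<Rightarrow> real mat" where
  "farris m S = mat m m (\<lambda>(u, v).
     if u = v then 0
     else if u < m - 1 \<and> v < m - 1 then S $$ (u, u) + S $$ (v, v) - 2 * S $$ (u, v)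
     else if v = m - 1 then S $$ (u, u) else S $$ (v, v))"

definition Gamma :: "nat \<Rightarrow> (nat \<Rightarrow> real) \<Rightarrow> (nat \<Rightarrow> nat \<Rightarrow> real) \<Rightarrow> real mat" where
  "Gamma m \<pi> w = farris m (the (mat_inverse (red_info_mat m \<pi> w)))"

definition CND_cone :: "nat \<Rightarrow> real mat set" where
  "CND_cone m = {G \<in> sym_mats m. (\<forall>i < m. G $$ (i, i) = 0) \<and>
     (\<forall>x \<in> carrier_vec m. x \<noteq> 0\<^sub>v m \<and> (\<Sum>i < m. x $ i) = 0 \<longrightarrow> x \<bullet> (G *\<^sub>v x) < 0)}"

definition Gamma_bar :: "nat \<Rightarrow> (nat \<Rightarrow> real) \<Rightarrow> real mat" where
  "Gamma_bar m \<pi> = mat m m (\<lambda>(u, v). if u = v then 0 else real (m - 1) / bt_lambda \<pi> u v)"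

definition bordered :: "nat \<Rightarrow> real mat \<Rightarrow> real mat" where
  "bordered m G = mat (m + 1) (m + 1) (\<lambda>(i, j).
     if i = 0 \<and> j = 0 then 0 else if i = 0 then -1 else if j = 0 then 1
     else - G $$ (i - 1, j - 1) / 2)"

definition simplified_dual_value :: "nat \<Rightarrow> (nat \<Rightarrow> real) \<Rightarrow> ereal" where
  "simplified_dual_value m \<pi> =
     (SUP G \<in> {G \<in> CND_cone m. \<forall>u < m. \<forall>v < m. G $$ (u, v) \<le> Gamma_bar m \<pi> $$ (u, v)}.
        logdet (bordered m G))"

end

(* Writing F for the Farris transform, tr (Z M^(m)(w)) = sum_uv w_uv lambda_uv F(Z)_uv, so the
   Lagrangian is affine in the design w with coefficients nu - mu_uv - lambda_uv F(Z)_uv.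
   The dual function is therefore -infinity unless these coefficients vanish and Z is positive
   definite; in that case the infimum over X of -log det X + tr (Z X) is log det Z + m - 1,
   attained at X = Z^-1.  Rescaling Z shows that nu = m - 1 is optimal, and mu >= 0 then reads
   lambda_uv F(Z)_uv <= m - 1, i.e. F(Z) <= Gamma-bar.  Finally F maps the positive definite
   matrices onto the cone C^m, and the bordered matrix of F(Z) has determinant det Z. *)

theory Submission
  imports Defs
begin

section \<open>Cholesky factorisation\<close>

definition quad_form :: "nat \<Rightarrow> (nat \<Rightarrow> nat \<Rightarrow> real) \<Rightarrow> (nat \<Rightarrow> real) \<Rightarrow> real" where
  "quad_form n A x = (\<Sum>i<n. \<Sum>j<n. x i * A i j * x j)"

definition pos_def :: "nat \<Rightarrow> (nat \<Rightarrow> nat \<Rightarrow> real) \<Rightarrow> bool" where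
  "pos_def n A \<longleftrightarrow> (\<forall>i<n. \<forall>j<n. A i j = A j i) \<and> (\<forall>x. (\<exists>i<n. x i \<noteq> 0) \<longrightarrow> quad_form n A x > 0)"

lemma pos_defD:
  assumes "pos_def n A"
  shows pos_def_sym: "i < n \<Longrightarrow> j < n \<Longrightarrow> A i j = A j i"
    and pos_def_quad_form_pos: "\<exists>i<n. x i \<noteq> 0 \<Longrightarrow> quad_form n A x > 0"
  using assms unfolding pos_def_def by auto

lemma quad_form_unit:
  assumes "k < n"
  shows "quad_form n A (\<lambda>i. if i = k then 1 else 0) = A k k"
proof -
  have "quad_form n A (\<lambda>i. if i = k then 1 else 0) = (\<Sum>i<n. \<Sum>j<n. if i = k \<and> j = k then A k k else 0)"
    unfolding quad_form_def by (intro sum.cong refl) auto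
  also have "\<dots> = (\<Sum>i<n. if i = k then A k k else 0)"
    by (intro sum.cong refl) (auto simp: assms)
  finally show ?thesis using assms by simp
qed

lemma pos_def_diag_pos:
  assumes "pos_def n A" and "k < n"
  shows "A k k > 0"
proof -
  have "\<exists>i<n. (if i = k then 1 else 0 :: real) \<noteq> 0" using \<open>k < n\<close> by auto
  then have "quad_form n A (\<lambda>i. if i = k then 1 else 0) > 0"
    by (rule pos_def_quad_form_pos[OF assms(1)])
  then show ?thesis using quad_form_unit[OF assms(2)] by simp
qed

lemma pos_def_schur_complement:
  assumes A: "pos_def (Suc n) A"
  shows "pos_def n (\<lambda>i j. A i j - A i n * A n j / A n n)" (is "pos_def n ?C")
  unfolding pos_def_def
proof (intro conjI allI impI)
  note sym = pos_def_sym[OF A]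
  show "?C i j = ?C j i" if "i < n" "j < n" for i j
    using that sym[of i j] sym[of i n] sym[of n j] by simp
  fix y :: "nat \<Rightarrow> real"
  assume y: "\<exists>i<n. y i \<noteq> 0"
  define a where "a = A n n"
  have a: "a > 0" unfolding a_def using pos_def_diag_pos[OF A] by simp
  define s where "s = (\<Sum>j<n. A n j * y j)"
  define Q where "Q = quad_form n A y"
  \<comment> \<open>Extending y by the last coordinate that minimises the quadratic form leaves the
    Schur complement form.\<close>
  define t where "t = - s / a"
  define x where "x = y(n := t)"
  have s_sym: "(\<Sum>i<n. y i * A i n) = s"
    unfolding s_def by (intro sum.cong refl) (simp add: sym)
  have "quad_form (Suc n) A x
      = (\<Sum>i<n. (\<Sum>j<n. y i * A i j * y j) + y i * A i n * t)
        + ((\<Sum>j<n. t * A n j * y j) + t * a * t)"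
    unfolding quad_form_def x_def a_def by simp
  also have "\<dots> = Q + t * (\<Sum>i<n. y i * A i n) + t * s + t * a * t"
    unfolding Q_def s_def quad_form_def by (simp add: sum.distrib sum_distrib_left algebra_simps)
  also have "\<dots> = Q - s * s / a"
    unfolding s_sym t_def using a by (simp add: field_simps)
  finally have x_form: "quad_form (Suc n) A x = Q - s * s / a" .
  have "quad_form n ?C y = (\<Sum>i<n. \<Sum>j<n. y i * A i j * y j - (y i * A i n) * (A n j * y j) / a)"
    unfolding quad_form_def a_def by (intro sum.cong refl) (simp add: algebra_simps)
  also have "\<dots> = Q - (\<Sum>i<n. \<Sum>j<n. (y i * A i n) * (A n j * y j) / a)"
    unfolding Q_def quad_form_def by (simp add: sum_subtractf)
  also have "(\<Sum>i<n. \<Sum>j<n. (y i * A i n) * (A n j * y j) / a) = (\<Sum>i<n. y i * A i n) * s / a"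
    unfolding s_def sum_product sum_divide_distrib by simp
  finally have "quad_form n ?C y = Q - s * s / a" unfolding s_sym .
  moreover from y obtain i where "i < n" "y i \<noteq> 0" by auto
  then have "\<exists>i<Suc n. x i \<noteq> 0" unfolding x_def by (intro exI[of _ i]) auto
  then have "quad_form (Suc n) A x > 0" by (rule pos_def_quad_form_pos[OF A])
  ultimately show "quad_form n ?C y > 0" using x_form by simp
qed

lemma cholesky_factorization:
  assumes "pos_def n A"
  shows "\<exists>U. (\<forall>i j. j < i \<longrightarrow> U i j = 0) \<and> (\<forall>i<n. U i i > 0) \<and>
      (\<forall>i<n. \<forall>j<n. A i j = (\<Sum>k<n. U i k * U j k))"
  using assms
proof (induction n arbitrary: A)
  case 0
  show ?case by (rule exI[of _ "\<lambda>i j. 0"]) auto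
next
  case (Suc n)
  note sym = pos_def_sym[OF Suc.prems]
  define a where "a = A n n"
  have a: "a > 0" unfolding a_def using pos_def_diag_pos[OF Suc.prems] by simp
  obtain V where V: "\<forall>i j. j < i \<longrightarrow> V i j = 0" "\<forall>i<n. V i i > 0"
    "\<forall>i<n. \<forall>j<n. A i j - A i n * A n j / a = (\<Sum>k<n. V i k * V j k)"
    using Suc.IH[OF pos_def_schur_complement[OF Suc.prems]] unfolding a_def by blast
  define U where "U = (\<lambda>i j. if j < n then (if i < n then V i j else 0)
      else if j = n \<and> i \<le> n then A i n / sqrt a else 0)"
  have U_last: "U i n * U j n = A i n * A n j / a" if "i < Suc n" "j < Suc n" for i j
    using that a sym[of n j] by (simp add: U_def real_sqrt_mult[symmetric] field_simps)
  show ?case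
  proof (intro exI[of _ U] conjI allI impI)
    fix i j :: nat assume "j < i" then show "U i j = 0" unfolding U_def using V(1) by auto
  next
    fix i assume "i < Suc n" then show "U i i > 0" unfolding U_def using V(2) a
      by (auto simp: a_def[symmetric] less_Suc_eq)
  next
    fix i j assume ij: "i < Suc n" "j < Suc n"
    have "(\<Sum>k<Suc n. U i k * U j k) = (\<Sum>k<n. U i k * U j k) + A i n * A n j / a"
      using U_last[OF ij] by simp
    also have "\<dots> = A i j"
    proof (cases "i < n \<and> j < n")
      case True
      then have "(\<Sum>k<n. U i k * U j k) = A i j - A i n * A n j / a"
        using V(3) by (simp add: U_def)
      then show ?thesis by simp
    next
      case False
      then have "i = n \<or> j = n" using ij by auto
      moreover have "(\<Sum>k<n. U i k * U j k) = 0" using False by (auto simp: U_def)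
      ultimately show ?thesis using a sym[of j n] by (auto simp: a_def)
    qed
    finally show "A i j = (\<Sum>k<Suc n. U i k * U j k)" by simp
  qed
qed

section \<open>Positive definite matrices\<close>

lemma transpose_eq_entry_sym:
  assumes "transpose_mat G = G" and "G \<in> carrier_mat n n" and "i < n" and "j < n"
  shows "G $$ (i, j) = G $$ (j, i)"
  using assms by (metis carrier_matD index_transpose_mat(1))

lemma scalar_prod_mult_mat_vec_eq_quad_form:
  assumes "A \<in> carrier_mat n n" and "x \<in> carrier_vec n"
  shows "x \<bullet> (A *\<^sub>v x) = quad_form n (\<lambda>i j. A $$ (i, j)) (\<lambda>i. x $ i)"
  using assms unfolding quad_form_def
  by (auto simp: scalar_prod_def atLeast0LessThan sum_distrib_left mult.assoc intro!: sum.cong)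

lemma pd_mats_iff: "Z \<in> pd_mats n \<longleftrightarrow> Z \<in> carrier_mat n n \<and> pos_def n (\<lambda>i j. Z $$ (i, j))"
proof (cases "Z \<in> carrier_mat n n")
  case Z: True
  have sym: "transpose_mat Z = Z \<longleftrightarrow> (\<forall>i<n. \<forall>j<n. Z $$ (i, j) = Z $$ (j, i))"
    using Z transpose_eq_entry_sym[of Z n] by (auto intro!: eq_matI)
  have "(\<forall>v\<in>carrier_vec n. v \<noteq> 0\<^sub>v n \<longrightarrow> v \<bullet> (Z *\<^sub>v v) > 0) \<longleftrightarrow>
      (\<forall>x. (\<exists>i<n. x i \<noteq> 0) \<longrightarrow> quad_form n (\<lambda>i j. Z $$ (i, j)) x > 0)"
  proof safe
    fix x :: "nat \<Rightarrow> real" and i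
    assume pos: "\<forall>v\<in>carrier_vec n. v \<noteq> 0\<^sub>v n \<longrightarrow> v \<bullet> (Z *\<^sub>v v) > 0" and "i < n" "x i \<noteq> 0"
    then have "vec n x \<noteq> 0\<^sub>v n" by (metis index_vec index_zero_vec(1))
    then have "quad_form n (\<lambda>i j. Z $$ (i, j)) (\<lambda>i. vec n x $ i) > 0"
      using pos scalar_prod_mult_mat_vec_eq_quad_form[OF Z] by (metis vec_carrier)
    moreover have "quad_form n (\<lambda>i j. Z $$ (i, j)) (\<lambda>i. vec n x $ i) = quad_form n (\<lambda>i j. Z $$ (i, j)) x"
      unfolding quad_form_def by (intro sum.cong refl) auto
    ultimately show "quad_form n (\<lambda>i j. Z $$ (i, j)) x > 0" by simp
  next
    fix v :: "real vec"
    assume pos: "\<forall>x. (\<exists>i<n. x i \<noteq> 0) \<longrightarrow> quad_form n (\<lambda>i j. Z $$ (i, j)) x > 0"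
      and v: "v \<in> carrier_vec n" "v \<noteq> 0\<^sub>v n"
    then have "\<exists>i<n. v $ i \<noteq> 0" by (metis eq_vecI carrier_vecD index_zero_vec)
    then show "v \<bullet> (Z *\<^sub>v v) > 0"
      using pos scalar_prod_mult_mat_vec_eq_quad_form[OF Z v(1)] by simp
  qed
  then show ?thesis using Z sym unfolding pd_mats_def sym_mats_def pos_def_def by auto
qed (auto simp: pd_mats_def sym_mats_def)

lemma pd_mats_carrier: "Z \<in> pd_mats n \<Longrightarrow> Z \<in> carrier_mat n n"
  by (simp add: pd_mats_iff)

lemma pd_mats_cholesky:
  assumes "Z \<in> pd_mats n"
  obtains U where "U \<in> carrier_mat n n" "upper_triangular U" "\<forall>i<n. U $$ (i, i) > 0"
    "Z = U * transpose_mat U"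
proof -
  obtain u where u: "\<forall>i j. j < i \<longrightarrow> u i j = 0" "\<forall>i<n. u i i > 0"
    "\<forall>i<n. \<forall>j<n. Z $$ (i, j) = (\<Sum>k<n. u i k * u j k)"
    using cholesky_factorization assms unfolding pd_mats_iff by blast
  let ?U = "mat n n (\<lambda>(i, j). u i j)"
  have "Z = ?U * transpose_mat ?U"
    using u(3) pd_mats_carrier[OF assms]
    by (intro eq_matI) (auto simp: scalar_prod_def atLeast0LessThan intro!: sum.cong)
  moreover have "upper_triangular ?U" using u(1) by (auto simp: upper_triangular_def)
  ultimately show ?thesis using that[of ?U] u(2) by auto
qed

lemma det_upper_triangular_prod:
  assumes "upper_triangular U" and "U \<in> carrier_mat n n"
  shows "det U = (\<Prod>i<n. U $$ (i, i))"
  using det_upper_triangular[OF assms] assms(2)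
  by (simp add: diag_mat_def prod.distinct_set_conv_list[symmetric] atLeast0LessThan)

lemma det_mult_transpose_upper_triangular:
  assumes "upper_triangular U" and "U \<in> carrier_mat n n"
  shows "det (U * transpose_mat U) = (\<Prod>i<n. U $$ (i, i))\<^sup>2"
  using assms det_mult[OF assms(2) transpose_carrier_mat[THEN iffD2, OF assms(2)]]
  by (simp add: det_transpose det_upper_triangular_prod power2_eq_square)

lemma congruence_mem_pd_mats:
  assumes X: "X \<in> pd_mats n" and U: "U \<in> carrier_mat n n" and "det U \<noteq> 0"
  shows "transpose_mat U * X * U \<in> pd_mats n"
proof -
  have Xc: "X \<in> carrier_mat n n" and Xt: "transpose_mat X = X"
    using X by (auto simp: pd_mats_def sym_mats_def)
  have "transpose_mat (transpose_mat U * X * U) = transpose_mat U * transpose_mat (transpose_mat U * X)"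
    using U Xc by (intro transpose_mult[of _ n n]) auto
  also have "transpose_mat (transpose_mat U * X) = X * U"
    using U Xc Xt by (subst transpose_mult[of _ n n]) auto
  finally have sym: "transpose_mat (transpose_mat U * X * U) = transpose_mat U * X * U"
    using U Xc by simp
  have "v \<bullet> ((transpose_mat U * X * U) *\<^sub>v v) > 0"
    if v: "v \<in> carrier_vec n" "v \<noteq> 0\<^sub>v n" for v
  proof -
    define u where "u = U *\<^sub>v v"
    have u: "u \<in> carrier_vec n" "u \<noteq> 0\<^sub>v n"
      using U v \<open>det U \<noteq> 0\<close> det_0_iff_vec_prod_zero[OF U] unfolding u_def by auto
    have "X * U \<in> carrier_mat n n" using U Xc by simp
    then have "v \<bullet> ((transpose_mat U * X * U) *\<^sub>v v) = v \<bullet> (transpose_mat U *\<^sub>v (X *\<^sub>v u))"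
      using U Xc v(1) unfolding u_def by (simp add: assoc_mult_mat_vec[of _ n n _ n])
    also have "\<dots> = (transpose_mat U *\<^sub>v (X *\<^sub>v u)) \<bullet> v"
      using U Xc u(1) v(1) by (intro comm_scalar_prod[of _ n]) auto
    also have "\<dots> = (X *\<^sub>v u) \<bullet> u"
      using U Xc u(1) v(1) unfolding u_def by (intro transpose_vec_mult_scalar) auto
    also have "\<dots> = u \<bullet> (X *\<^sub>v u)"
      using Xc u(1) by (intro comm_scalar_prod[of _ n]) auto
    finally show ?thesis using X u unfolding pd_mats_def by auto
  qed
  then show ?thesis using U Xc sym unfolding pd_mats_def sym_mats_def by auto
qed

lemma one_mem_pd_mats: "1\<^sub>m n \<in> pd_mats n"
  unfolding pd_mats_iff pos_def_def
proof (intro conjI allI impI)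
  fix x :: "nat \<Rightarrow> real"
  assume "\<exists>i<n. x i \<noteq> 0"
  then obtain k where k: "k < n" "x k \<noteq> 0" by blast
  have "quad_form n (\<lambda>i j. 1\<^sub>m n $$ (i, j)) x = (\<Sum>i<n. (x i)\<^sup>2)"
    unfolding quad_form_def by (intro sum.cong refl) (simp add: power2_eq_square if_distrib if_distribR cong: if_cong)
  also have "\<dots> \<ge> (x k)\<^sup>2" using k by (intro member_le_sum) auto
  finally show "quad_form n (\<lambda>i j. 1\<^sub>m n $$ (i, j)) x > 0" using k(2)
    by (meson order.strict_trans2 zero_less_power2)
qed auto

lemma gram_mem_pd_mats:
  assumes "U \<in> carrier_mat n n" and "det U \<noteq> 0"
  shows "U * transpose_mat U \<in> pd_mats n"
  using congruence_mem_pd_mats[OF one_mem_pd_mats, of "transpose_mat U" n] assms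
  by (simp add: det_transpose)

lemma pd_mats_det_pos:
  assumes "Z \<in> pd_mats n"
  shows "det Z > 0"
proof -
  obtain U where U: "U \<in> carrier_mat n n" "upper_triangular U" "\<forall>i<n. U $$ (i, i) > 0"
    and Z: "Z = U * transpose_mat U"
    using pd_mats_cholesky[OF assms] .
  have "det Z = (\<Prod>i<n. U $$ (i, i))\<^sup>2"
    unfolding Z by (rule det_mult_transpose_upper_triangular[OF U(2,1)])
  moreover have "(\<Prod>i<n. U $$ (i, i)) > 0" using U(3) by (intro prod_pos) auto
  ultimately show ?thesis by (metis zero_less_power)
qed

lemma pd_mats_inverse:
  assumes Z: "Z \<in> pd_mats n"
  obtains B where "B \<in> pd_mats n" "Z * B = 1\<^sub>m n"
proof -
  have Zc: "Z \<in> carrier_mat n n" by (rule pd_mats_carrier[OF Z])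
  have "Z \<in> Units (ring_mat TYPE(real) n ())"
    using det_non_zero_imp_unit[OF Zc] pd_mats_det_pos[OF Z] by simp
  then obtain B where "mat_inverse Z = Some B" using mat_inverse(1)[OF Zc] by fastforce
  then have ZB: "Z * B = 1\<^sub>m n" and Bc: "B \<in> carrier_mat n n"
    using mat_inverse(2)[OF Zc] by auto
  have "det Z * det B = 1" using det_mult[OF Zc Bc] ZB by simp
  then have "det B \<noteq> 0" by auto
  \<comment> \<open>The transpose of B equals B' Z B, so it is congruent to Z, hence positive definite and
    in particular symmetric.\<close>
  have "transpose_mat B = transpose_mat B * Z * B"
    using Zc Bc ZB by (simp add: assoc_mult_mat[of _ n n _ n _ n])
  then have Bt: "transpose_mat B \<in> pd_mats n"
    using congruence_mem_pd_mats[OF Z Bc \<open>det B \<noteq> 0\<close>] by simp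
  then have "transpose_mat B = B"
    unfolding pd_mats_def sym_mats_def by (metis (mono_tags, lifting) mem_Collect_eq transpose_transpose)
  then show ?thesis using that Bt ZB by simp
qed

lemma mtrace_mult:
  assumes "A \<in> carrier_mat n k" and "B \<in> carrier_mat k n"
  shows "mtrace (A * B) = (\<Sum>i<n. \<Sum>j<k. A $$ (i, j) * B $$ (j, i))"
  unfolding mtrace_def using assms
  by (auto simp: scalar_prod_def atLeast0LessThan intro!: sum.cong)

lemma mtrace_mult_commute:
  assumes "A \<in> carrier_mat n k" and "B \<in> carrier_mat k n"
  shows "mtrace (A * B) = mtrace (B * A)"
  unfolding mtrace_mult[OF assms] mtrace_mult[OF assms(2,1)]
  by (subst sum.swap) (simp add: mult.commute)

lemma ln_det_le_mtrace:
  assumes "Z \<in> pd_mats n"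
  shows "ln (det Z) \<le> mtrace Z - real n"
proof -
  obtain U where U: "U \<in> carrier_mat n n" "upper_triangular U" "\<forall>i<n. U $$ (i, i) > 0"
    and Z: "Z = U * transpose_mat U"
    using pd_mats_cholesky[OF assms] .
  have "det Z = (\<Prod>i<n. (U $$ (i, i))\<^sup>2)"
    unfolding Z det_mult_transpose_upper_triangular[OF U(2,1)] by (simp add: prod_power_distrib)
  moreover have "ln (\<Prod>i<n. (U $$ (i, i))\<^sup>2) = (\<Sum>i<n. ln ((U $$ (i, i))\<^sup>2))"
    using U(3) by (intro ln_prod) auto
  ultimately have "ln (det Z) = (\<Sum>i<n. ln ((U $$ (i, i))\<^sup>2))" by simp
  also have "\<dots> \<le> (\<Sum>i<n. (U $$ (i, i))\<^sup>2 - 1)"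
    using U(3) by (intro sum_mono ln_le_minus_one) auto
  also have "\<dots> \<le> (\<Sum>i<n. \<Sum>j<n. (U $$ (i, j))\<^sup>2) - real n"
    by (simp add: sum_subtractf) (intro sum_mono member_le_sum; simp)
  also have "(\<Sum>i<n. \<Sum>j<n. (U $$ (i, j))\<^sup>2) = mtrace Z"
    unfolding Z mtrace_mult[OF U(1) transpose_carrier_mat[THEN iffD2, OF U(1)]] using U(1)
    by (auto simp: power2_eq_square intro!: sum.cong)
  finally show ?thesis .
qed

text \<open>With Z = U U', the matrix U' X U has determinant det Z det X and trace tr (Z X), so
  the inequality reduces to the case Z = 1.\<close>
lemma ln_det_add_ln_det_le_mtrace_mult:
  assumes Z: "Z \<in> pd_mats n" and X: "X \<in> pd_mats n"
  shows "ln (det Z) + ln (det X) \<le> mtrace (Z * X) - real n"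
proof -
  obtain U where U: "U \<in> carrier_mat n n" "upper_triangular U" "\<forall>i<n. U $$ (i, i) > 0"
    and ZU: "Z = U * transpose_mat U"
    using pd_mats_cholesky[OF Z] .
  note Ut = transpose_carrier_mat[THEN iffD2, OF U(1)] and Xc = pd_mats_carrier[OF X]
  have "(\<Prod>i<n. U $$ (i, i)) > 0" using U(3) by (intro prod_pos) auto
  then have "det U \<noteq> 0" using det_upper_triangular_prod[OF U(2,1)] by linarith
  then have Y: "transpose_mat U * X * U \<in> pd_mats n" by (rule congruence_mem_pd_mats[OF X U(1)])
  have "det (transpose_mat U * X * U) = det Z * det X"
    unfolding ZU using U(1) Ut Xc by (simp add: det_mult[of _ n] det_transpose)
  then have "ln (det Z) + ln (det X) = ln (det (transpose_mat U * X * U))"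
    using pd_mats_det_pos[OF Z] pd_mats_det_pos[OF X] by (simp add: ln_mult)
  also have "\<dots> \<le> mtrace (transpose_mat U * X * U) - real n" by (rule ln_det_le_mtrace[OF Y])
  also have "mtrace (transpose_mat U * X * U) = mtrace (X * Z)"
    unfolding ZU using U(1) Ut Xc
    by (simp add: mtrace_mult_commute[of "transpose_mat U" n n] assoc_mult_mat[of _ n n _ n _ n])
  also have "\<dots> = mtrace (Z * X)" using Xc pd_mats_carrier[OF Z] by (rule mtrace_mult_commute)
  finally show ?thesis .
qed

section \<open>The Farris transform\<close>

definition zero_pad :: "nat \<Rightarrow> real mat \<Rightarrow> nat \<Rightarrow> nat \<Rightarrow> real" where
  "zero_pad n Z i j = (if i < n \<and> j < n then Z $$ (i, j) else 0)"

lemma farris_carrier: "farris m Z \<in> carrier_mat m m"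
  unfolding farris_def by simp

lemma farris_entry:
  assumes "u < Suc n" "v < Suc n"
  shows "farris (Suc n) Z $$ (u, v) = zero_pad n Z u u + zero_pad n Z v v - 2 * zero_pad n Z u v"
  using assms unfolding farris_def zero_pad_def by (auto simp: less_Suc_eq)

lemma zero_pad_sym:
  assumes "\<forall>i<n. \<forall>j<n. Z $$ (i, j) = Z $$ (j, i)"
  shows "zero_pad n Z i j = zero_pad n Z j i"
  using assms unfolding zero_pad_def by auto

lemma quad_form_farris:
  fixes y :: "nat \<Rightarrow> real"
  shows "quad_form (Suc n) (\<lambda>u v. farris (Suc n) Z $$ (u, v)) y =
    2 * (\<Sum>u<Suc n. y u) * (\<Sum>u<Suc n. y u * zero_pad n Z u u) - 2 * quad_form n (\<lambda>i j. Z $$ (i, j)) y"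
proof -
  let ?P = "zero_pad n Z"
  have "quad_form (Suc n) (\<lambda>u v. farris (Suc n) Z $$ (u, v)) y =
     (\<Sum>u<Suc n. \<Sum>v<Suc n. (y u * ?P u u) * y v + y u * (?P v v * y v) - 2 * (y u * ?P u v * y v))"
    unfolding quad_form_def by (intro sum.cong refl) (simp add: farris_entry algebra_simps)
  also have "\<dots> = (\<Sum>u<Suc n. \<Sum>v<Suc n. (y u * ?P u u) * y v) + (\<Sum>u<Suc n. \<Sum>v<Suc n. y u * (?P v v * y v))
      - 2 * (\<Sum>u<Suc n. \<Sum>v<Suc n. y u * ?P u v * y v)"
    by (simp add: sum.distrib sum_subtractf sum_distrib_left)
  also have "(\<Sum>u<Suc n. \<Sum>v<Suc n. (y u * ?P u u) * y v) = (\<Sum>u<Suc n. y u * ?P u u) * (\<Sum>u<Suc n. y u)"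
    by (rule sum_product[symmetric])
  also have "(\<Sum>u<Suc n. \<Sum>v<Suc n. y u * (?P v v * y v)) = (\<Sum>u<Suc n. y u) * (\<Sum>u<Suc n. y u * ?P u u)"
    unfolding sum_product by (intro sum.cong refl) (simp add: mult_ac)
  also have "(\<Sum>u<Suc n. \<Sum>v<Suc n. y u * ?P u v * y v) = quad_form n (\<lambda>i j. Z $$ (i, j)) y"
    unfolding quad_form_def by (simp add: zero_pad_def)
  finally show ?thesis by simp
qed

lemma scalar_prod_farris_eq:
  assumes x: "x \<in> carrier_vec (Suc n)" and sum_x: "(\<Sum>i<Suc n. x $ i) = 0"
  shows "x \<bullet> (farris (Suc n) Z *\<^sub>v x) = - 2 * quad_form n (\<lambda>i j. Z $$ (i, j)) (\<lambda>i. x $ i)"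
  using quad_form_farris[of n Z "\<lambda>i. x $ i"] sum_x
    scalar_prod_mult_mat_vec_eq_quad_form[OF farris_carrier x] by simp

lemma farris_mem_CND_cone:
  assumes Z: "Z \<in> pd_mats n"
  shows "farris (Suc n) Z \<in> CND_cone (Suc n)"
proof -
  let ?G = "farris (Suc n) Z"
  have pos: "pos_def n (\<lambda>i j. Z $$ (i, j))" using Z by (simp add: pd_mats_iff)
  have "transpose_mat ?G = ?G"
    using zero_pad_sym[of n Z] pos_def_sym[OF pos]
    by (intro eq_matI) (auto simp: farris_carrier[THEN carrier_matD(1)] farris_carrier[THEN carrier_matD(2)]
        farris_entry)
  moreover have "x \<bullet> (?G *\<^sub>v x) < 0"
    if x: "x \<in> carrier_vec (Suc n)" "x \<noteq> 0\<^sub>v (Suc n)" "(\<Sum>i<Suc n. x $ i) = 0" for x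
  proof -
    have "\<exists>i<n. x $ i \<noteq> 0"
    proof (rule ccontr)
      assume "\<not> ?thesis"
      then have "\<forall>i<n. x $ i = 0" by auto
      moreover from this have "x $ n = 0" using x(3) by simp
      ultimately have "x = 0\<^sub>v (Suc n)" using x(1) by (intro eq_vecI) (auto simp: less_Suc_eq)
      then show False using x(2) by simp
    qed
    then show ?thesis using pos_def_quad_form_pos[OF pos] scalar_prod_farris_eq[OF x(1,3)] by simp
  qed
  ultimately show ?thesis
    unfolding CND_cone_def sym_mats_def using farris_carrier by (auto simp: farris_def)
qed

lemma farris_inverse:
  assumes G: "G \<in> carrier_mat (Suc n) (Suc n)" "transpose_mat G = G" "\<forall>i<Suc n. G $$ (i, i) = 0"
  shows "farris (Suc n) (mat n n (\<lambda>(u, v). (G $$ (u, n) + G $$ (v, n) - G $$ (u, v)) / 2)) = G"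
proof (rule eq_matI)
  let ?Z = "mat n n (\<lambda>(u, v). (G $$ (u, n) + G $$ (v, n) - G $$ (u, v)) / 2)"
  have diag: "?Z $$ (i, i) = G $$ (i, n)" if "i < n" for i
    using that G(3) by simp
  fix u v
  assume "u < dim_row G" "v < dim_col G"
  then have uv: "u < Suc n" "v < Suc n" using G(1) by auto
  consider "u = v" | "u \<noteq> v" "u < n" "v < n" | "u \<noteq> v" "v = n" | "u \<noteq> v" "u = n"
    using uv by linarith
  then show "farris (Suc n) ?Z $$ (u, v) = G $$ (u, v)"
  proof cases
    case 1
    then show ?thesis using uv G(3) by (simp add: farris_def)
  next
    case 2
    then show ?thesis using diag by (simp add: farris_def field_simps)
  next
    case 3
    then show ?thesis using uv diag by (simp add: farris_def)
  next
    case 4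
    then show ?thesis using uv diag transpose_eq_entry_sym[OF G(2,1), of n v] by (simp add: farris_def)
  qed
qed (use G(1) farris_carrier in auto)

lemma CND_cone_farris:
  assumes G: "G \<in> CND_cone (Suc n)"
  obtains Z where "Z \<in> pd_mats n" "farris (Suc n) Z = G"
proof -
  have Gc: "G \<in> carrier_mat (Suc n) (Suc n)" and Gt: "transpose_mat G = G"
    and Gd: "\<forall>i<Suc n. G $$ (i, i) = 0"
    and neg: "\<And>x. x \<in> carrier_vec (Suc n) \<Longrightarrow> x \<noteq> 0\<^sub>v (Suc n) \<Longrightarrow> (\<Sum>i<Suc n. x $ i) = 0
      \<Longrightarrow> x \<bullet> (G *\<^sub>v x) < 0"
    using G unfolding CND_cone_def sym_mats_def by auto
  define Z where "Z = mat n n (\<lambda>(u, v). (G $$ (u, n) + G $$ (v, n) - G $$ (u, v)) / 2)"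
  have FZ: "farris (Suc n) Z = G" unfolding Z_def by (rule farris_inverse[OF Gc Gt Gd])
  have "pos_def n (\<lambda>i j. Z $$ (i, j))" unfolding pos_def_def
  proof (intro conjI allI impI)
    fix i j assume "i < n" "j < n"
    then show "Z $$ (i, j) = Z $$ (j, i)"
      using transpose_eq_entry_sym[OF Gt Gc, of i j] unfolding Z_def by simp
  next
    fix y :: "nat \<Rightarrow> real"
    assume "\<exists>i<n. y i \<noteq> 0"
    then obtain i where i: "i < n" "y i \<noteq> 0" by auto
    define x where "x = vec (Suc n) (\<lambda>i. if i < n then y i else - (\<Sum>j<n. y j))"
    have x: "x \<in> carrier_vec (Suc n)" "(\<Sum>i<Suc n. x $ i) = 0" unfolding x_def by simp_all
    have "x $ i \<noteq> 0" using i unfolding x_def by simp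
    then have "x \<noteq> 0\<^sub>v (Suc n)" using i by auto
    then have "- 2 * quad_form n (\<lambda>i j. Z $$ (i, j)) (\<lambda>i. x $ i) < 0"
      using neg[OF x(1) _ x(2)] scalar_prod_farris_eq[OF x, of Z] FZ by simp
    moreover have "quad_form n (\<lambda>i j. Z $$ (i, j)) (\<lambda>i. x $ i) = quad_form n (\<lambda>i j. Z $$ (i, j)) y"
      unfolding quad_form_def x_def by (intro sum.cong refl) auto
    ultimately show "quad_form n (\<lambda>i j. Z $$ (i, j)) y > 0" by simp
  qed
  then have "Z \<in> pd_mats n" unfolding pd_mats_iff Z_def by simp
  then show ?thesis using that FZ by blast
qed

definition bordered_pad :: "nat \<Rightarrow> real mat \<Rightarrow> real mat" where
  "bordered_pad n Z = mat (n + 2) (n + 2) (\<lambda>(i, j).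
     if i = 0 \<and> j = 0 then 0 else if i = 0 then -1 else if j = 0 then 1
     else zero_pad n Z (i - 1) (j - 1))"

lemma det_bordered_pad:
  assumes Z: "Z \<in> carrier_mat n n"
  shows "det (bordered_pad n Z) = det Z"
proof -
  let ?K = "bordered_pad n Z"
  have K: "?K \<in> carrier_mat (n + 2) (n + 2)" unfolding bordered_pad_def by simp
  define D where "D = mat_delete ?K (Suc n) 0"
  have D: "D \<in> carrier_mat (Suc n) (Suc n)"
    using mat_delete_carrier[OF K] by (simp add: D_def)
  have D_entry: "D $$ (i, j) = ?K $$ (i, Suc j)" if "i < Suc n" "j < Suc n" for i j
    using that K by (simp add: D_def mat_delete_def)
  \<comment> \<open>The last row of the padded matrix is (1, 0, ..., 0), and then the last column is (-1, 0, ..., 0).\<close>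
  have "det ?K = (\<Sum>j<n + 2. ?K $$ (Suc n, j) * cofactor ?K (Suc n) j)"
    by (rule laplace_expansion_row[OF K]) simp
  also have "\<dots> = (\<Sum>j<n + 2. if j = 0 then cofactor ?K (Suc n) 0 else 0)"
    by (intro sum.cong refl) (auto simp: bordered_pad_def zero_pad_def)
  also have "\<dots> = (-1) ^ Suc n * det D" by (simp add: cofactor_def D_def)
  finally have det_K: "det ?K = (-1) ^ Suc n * det D" .
  have "det D = (\<Sum>i<Suc n. D $$ (i, n) * cofactor D i n)"
    by (rule laplace_expansion_column[OF D]) simp
  also have "\<dots> = (\<Sum>i<Suc n. if i = 0 then - cofactor D 0 n else 0)"
    by (intro sum.cong refl) (auto simp: D_entry bordered_pad_def zero_pad_def)
  also have "\<dots> = - ((-1) ^ n * det (mat_delete D 0 n))" by (simp add: cofactor_def)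
  also have "mat_delete D 0 n = Z"
    by (rule eq_matI) (use D Z in \<open>auto simp: mat_delete_def D_entry bordered_pad_def zero_pad_def\<close>)
  finally show ?thesis unfolding det_K by (simp add: power_mult_distrib[symmetric])
qed

lemma det_unitriangular:
  assumes "upper_triangular A" and "A \<in> carrier_mat n n" and "\<forall>i<n. A $$ (i, i) = 1"
  shows "det A = 1"
  using det_upper_triangular_prod[OF assms(1,2)] assms(3) by simp

lemma add_first_row_mult_entry:
  fixes K :: "'a :: comm_ring_1 mat"
  assumes K: "K \<in> carrier_mat N N" and "i < N" "j < N"
  shows "(mat N N (\<lambda>(i, j). (if i = j then 1 else 0) + (if j = 0 \<and> i \<noteq> 0 then h i else 0)) * K) $$ (i, j)
    = K $$ (i, j) + (if i \<noteq> 0 then h i * K $$ (0, j) else 0)"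
    (is "(?L * K) $$ (i, j) = _")
proof -
  have "(?L * K) $$ (i, j) = (\<Sum>a<N. ?L $$ (i, a) * K $$ (a, j))"
    using assms by (auto simp: scalar_prod_def atLeast0LessThan intro!: sum.cong)
  also have "\<dots> = (\<Sum>a<N. (if a = i then K $$ (a, j) else 0)
      + (if a = 0 then (if i \<noteq> 0 then h i * K $$ (0, j) else 0) else 0))"
    using assms by (intro sum.cong refl) auto
  finally show ?thesis using assms by (simp add: sum.distrib)
qed

lemma mult_sub_first_col_entry:
  fixes P :: "'a :: comm_ring_1 mat"
  assumes P: "P \<in> carrier_mat N N" and "i < N" "j < N"
  shows "(P * mat N N (\<lambda>(i, j). (if i = j then 1 else 0) - (if i = 0 \<and> j \<noteq> 0 then h j else 0))) $$ (i, j)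
    = P $$ (i, j) - (if j \<noteq> 0 then P $$ (i, 0) * h j else 0)"
    (is "(P * ?R) $$ (i, j) = _")
proof -
  have "(P * ?R) $$ (i, j) = (\<Sum>b<N. P $$ (i, b) * ?R $$ (b, j))"
    using assms by (auto simp: scalar_prod_def atLeast0LessThan intro!: sum.cong)
  also have "\<dots> = (\<Sum>b<N. (if b = j then P $$ (i, b) else 0)
      - (if b = 0 then (if j \<noteq> 0 then P $$ (i, 0) * h j else 0) else 0))"
    using assms by (intro sum.cong refl) auto
  finally show ?thesis using assms by (simp add: sum_subtractf)
qed

lemma det_bordered_farris:
  assumes Z: "Z \<in> carrier_mat n n"
  shows "det (bordered (Suc n) (farris (Suc n) Z)) = det Z"
proof -
  define N where "N = n + 2"
  let ?K = "bordered_pad n Z"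
  \<comment> \<open>L adds h i times the first row to row i and R subtracts h j times the first column from
    column j; this turns the padded matrix into the bordered Farris transform.\<close>
  define h where "h = (\<lambda>i. if i = 0 then 0 else zero_pad n Z (i - 1) (i - 1) / 2)"
  define L where "L = mat N N (\<lambda>(i, j). (if i = j then 1 else 0) + (if j = 0 \<and> i \<noteq> 0 then h i else 0))"
  define R where "R = mat N N (\<lambda>(i, j). (if i = j then 1 else 0) - (if i = 0 \<and> j \<noteq> 0 then h j else 0))"
  have K: "?K \<in> carrier_mat N N" unfolding bordered_pad_def N_def by simp
  have L: "L \<in> carrier_mat N N" and R: "R \<in> carrier_mat N N" unfolding L_def R_def by auto
  have LK: "L * ?K \<in> carrier_mat N N" using L K by simp
  have factor: "bordered (Suc n) (farris (Suc n) Z) = L * ?K * R"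
  proof (rule eq_matI)
    fix i j assume "i < dim_row (L * ?K * R)" "j < dim_col (L * ?K * R)"
    then have ij: "i < N" "j < N" using LK R by auto
    have "(L * ?K) $$ (i, 0) = (if i = 0 then 0 else 1)"
      using add_first_row_mult_entry[OF K ij(1), of 0 h] ij by (simp add: L_def bordered_pad_def N_def)
    then show "bordered (Suc n) (farris (Suc n) Z) $$ (i, j) = (L * ?K * R) $$ (i, j)"
      unfolding R_def mult_sub_first_col_entry[OF LK ij] unfolding L_def add_first_row_mult_entry[OF K ij]
      using ij by (auto simp: bordered_def bordered_pad_def h_def farris_entry N_def field_simps)
  qed (use LK R in \<open>auto simp: bordered_def N_def\<close>)
  have "det L = 1"
  proof -
    have "upper_triangular (transpose_mat L)" by (auto simp: L_def)
    then have "det (transpose_mat L) = 1" using L by (intro det_unitriangular) (auto simp: L_def)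
    then show ?thesis using det_transpose[OF L] by simp
  qed
  moreover have "det R = 1" using R by (intro det_unitriangular) (auto simp: R_def)
  ultimately show ?thesis
    unfolding factor det_mult[OF LK R] det_mult[OF L K] det_bordered_pad[OF Z] by simp
qed

section \<open>The information matrix and the Lagrangian\<close>

lemma finite_pairs: "finite (pairs m)"
  by (rule finite_subset[of _ "{..<m} \<times> {..<m}"]) (auto simp: pairs_def)

lemma sum_pairs_delta:
  "(\<Sum>(a, b)\<in>pairs m. if a = u \<and> b = v then f a b else 0) = (if u < v \<and> v < m then f u v else (0::real))"
proof -
  have "(\<Sum>(a, b)\<in>pairs m. if a = u \<and> b = v then f a b else 0) = (\<Sum>p\<in>pairs m. if p = (u, v) then f u v else 0)"
    by (intro sum.cong refl) (auto split: if_splits)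
  also have "\<dots> = (if (u, v) \<in> pairs m then f u v else 0)" using finite_pairs by (simp add: sum.delta)
  finally show ?thesis by (simp add: pairs_def)
qed

lemma sum_pairs_incident:
  assumes "i < m"
  shows "(\<Sum>(a, b)\<in>pairs m. if a = i \<or> b = i then f a b else 0) =
    (\<Sum>k\<in>{..<m} - {i}. f (min i k) (max i k))"
proof -
  let ?g = "\<lambda>k. (min i k, max i k)"
  have image: "?g ` ({..<m} - {i}) = {p \<in> pairs m. fst p = i \<or> snd p = i}"
  proof
    show "?g ` ({..<m} - {i}) \<subseteq> {p \<in> pairs m. fst p = i \<or> snd p = i}"
      using assms by (auto simp: pairs_def min_def max_def split: if_splits)
  next
    show "{p \<in> pairs m. fst p = i \<or> snd p = i} \<subseteq> ?g ` ({..<m} - {i})"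
    proof clarify
      fix a b assume "(a, b) \<in> pairs m" "fst (a, b) = i \<or> snd (a, b) = i"
      then consider "a = i" "i < b" "b < m" | "b = i" "a < i" by (auto simp: pairs_def)
      then show "(a, b) \<in> ?g ` ({..<m} - {i})"
        using assms by cases (auto intro: rev_image_eqI[of b] rev_image_eqI[of a])
    qed
  qed
  have "inj_on ?g ({..<m} - {i})" by (auto simp: inj_on_def min_def max_def split: if_splits)
  then have "(\<Sum>k\<in>{..<m} - {i}. f (min i k) (max i k)) = (\<Sum>(a, b)\<in>?g ` ({..<m} - {i}). f a b)"
    by (simp add: sum.reindex)
  also have "\<dots> = (\<Sum>(a, b)\<in>{p \<in> pairs m. fst p = i \<or> snd p = i}. f a b)"
    unfolding image ..
  also have "\<dots> = (\<Sum>(a, b)\<in>pairs m. if a = i \<or> b = i then f a b else 0)"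
    using finite_pairs by (simp add: sum.inter_filter[symmetric] case_prod_beta if_distrib)
  finally show ?thesis ..
qed

lemma bt_lambda_sym: "bt_lambda \<pi> a b = bt_lambda \<pi> b a"
  unfolding bt_lambda_def by (simp add: mult.commute add.commute)

lemma bt_lambda_pos: "\<pi> a > 0 \<Longrightarrow> \<pi> b > 0 \<Longrightarrow> bt_lambda \<pi> a b > 0"
  unfolding bt_lambda_def by simp

definition edge_laplacian :: "nat \<Rightarrow> nat \<Rightarrow> nat \<Rightarrow> nat \<Rightarrow> real" where
  "edge_laplacian a b i j = (if i = a \<and> j = a then 1 else 0) + (if i = b \<and> j = b then 1 else 0)
     - (if i = a \<and> j = b then 1 else 0) - (if i = b \<and> j = a then 1 else 0)"

lemma info_mat_entry:
  assumes "i < m" "j < m"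
  shows "info_mat m \<pi> w $$ (i, j) = (\<Sum>(a, b)\<in>pairs m. w a b * bt_lambda \<pi> a b * edge_laplacian a b i j)"
proof (cases "i = j")
  case True
  have "(\<Sum>(a, b)\<in>pairs m. w a b * bt_lambda \<pi> a b * edge_laplacian a b i j) =
     (\<Sum>(a, b)\<in>pairs m. if a = i \<or> b = i then w a b * bt_lambda \<pi> a b else 0)"
    using True by (intro sum.cong refl) (auto simp: edge_laplacian_def pairs_def)
  also have "\<dots> = (\<Sum>k\<in>{..<m} - {i}. bt_lambda \<pi> i k * symw w i k)"
    unfolding sum_pairs_incident[OF assms(1)]
    by (intro sum.cong refl) (auto simp: symw_def min_def max_def bt_lambda_sym)
  finally show ?thesis using assms True by (simp add: info_mat_def)
next
  case False
  have "(\<Sum>(a, b)\<in>pairs m. w a b * bt_lambda \<pi> a b * edge_laplacian a b i j) =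
     (\<Sum>(a, b)\<in>pairs m. if a = i \<and> b = j then - (w a b * bt_lambda \<pi> a b) else 0)
     + (\<Sum>(a, b)\<in>pairs m. if a = j \<and> b = i then - (w a b * bt_lambda \<pi> a b) else 0)"
    using False unfolding sum.distrib[symmetric]
    by (intro sum.cong refl) (auto simp: edge_laplacian_def)
  also have "\<dots> = (if i < j then - (w i j * bt_lambda \<pi> i j) else 0)
      + (if j < i then - (w j i * bt_lambda \<pi> j i) else 0)"
    unfolding sum_pairs_delta using assms by simp
  finally show ?thesis
    using assms False by (auto simp: info_mat_def symw_def bt_lambda_sym)
qed

lemma red_info_mat_carrier: "red_info_mat m \<pi> w \<in> carrier_mat (m - 1) (m - 1)"
  unfolding red_info_mat_def by simp

lemma sum_edge_laplacian_eq_farris: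
  assumes sym: "\<forall>i<n. \<forall>j<n. Z $$ (i, j) = Z $$ (j, i)" and "a < b" "b < Suc n"
  shows "(\<Sum>i<n. \<Sum>j<n. Z $$ (i, j) * edge_laplacian a b j i) = farris (Suc n) Z $$ (a, b)"
proof -
  have delta: "(\<Sum>i<n. \<Sum>j<n. Z $$ (i, j) * (if j = u \<and> i = v then 1 else 0)) = zero_pad n Z v u" for u v
  proof -
    have "(\<Sum>j<n. Z $$ (i, j) * (if j = u \<and> i = v then 1 else 0)) =
        (\<Sum>j<n. if j = u then (if i = v then Z $$ (v, u) else 0) else 0)" for i
      by (intro sum.cong refl) auto
    then have "(\<Sum>i<n. \<Sum>j<n. Z $$ (i, j) * (if j = u \<and> i = v then 1 else 0))
        = (\<Sum>i<n. if i = v then (\<Sum>j<n. if j = u then Z $$ (v, u) else 0) else 0)"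
      by (intro sum.cong refl) auto
    then show ?thesis by (simp add: zero_pad_def)
  qed
  have "(\<Sum>i<n. \<Sum>j<n. Z $$ (i, j) * edge_laplacian a b j i) =
     (\<Sum>i<n. \<Sum>j<n. Z $$ (i, j) * (if j = a \<and> i = a then 1 else 0)) +
     (\<Sum>i<n. \<Sum>j<n. Z $$ (i, j) * (if j = b \<and> i = b then 1 else 0)) -
     (\<Sum>i<n. \<Sum>j<n. Z $$ (i, j) * (if j = a \<and> i = b then 1 else 0)) -
     (\<Sum>i<n. \<Sum>j<n. Z $$ (i, j) * (if j = b \<and> i = a then 1 else 0))"
    unfolding edge_laplacian_def by (simp add: algebra_simps sum.distrib sum_subtractf)
  also have "\<dots> = farris (Suc n) Z $$ (a, b)"
    unfolding delta using assms by (simp add: farris_entry zero_pad_sym[OF sym, of b a])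
  finally show ?thesis .
qed

lemma mtrace_mult_red_info_mat:
  assumes Z: "Z \<in> carrier_mat n n" and sym: "\<forall>i<n. \<forall>j<n. Z $$ (i, j) = Z $$ (j, i)"
  shows "mtrace (Z * red_info_mat (Suc n) \<pi> w) =
    (\<Sum>(a, b)\<in>pairs (Suc n). w a b * bt_lambda \<pi> a b * farris (Suc n) Z $$ (a, b))"
proof -
  have "mtrace (Z * red_info_mat (Suc n) \<pi> w) =
      (\<Sum>i<n. \<Sum>j<n. Z $$ (i, j) * (\<Sum>(a, b)\<in>pairs (Suc n). w a b * bt_lambda \<pi> a b * edge_laplacian a b j i))"
    unfolding mtrace_mult[OF Z red_info_mat_carrier[of "Suc n", simplified]]
    by (intro sum.cong refl) (simp add: red_info_mat_def info_mat_entry)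
  also have "\<dots> = (\<Sum>(a, b)\<in>pairs (Suc n). w a b * bt_lambda \<pi> a b *
      (\<Sum>i<n. \<Sum>j<n. Z $$ (i, j) * edge_laplacian a b j i))"
    by (simp add: sum_distrib_left sum_distrib_right split_def mult_ac sum.swap[of _ "pairs _"])
  also have "\<dots> = (\<Sum>(a, b)\<in>pairs (Suc n). w a b * bt_lambda \<pi> a b * farris (Suc n) Z $$ (a, b))"
    by (intro sum.cong refl) (auto simp: pairs_def sum_edge_laplacian_eq_farris[OF sym])
  finally show ?thesis .
qed

lemma sym_mats_entry_sym: "Z \<in> sym_mats n \<Longrightarrow> \<forall>i<n. \<forall>j<n. Z $$ (i, j) = Z $$ (j, i)"
  unfolding sym_mats_def using transpose_eq_entry_sym by blast

lemma lagrangian_eq: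
  assumes Z: "Z \<in> sym_mats n" and X: "X \<in> carrier_mat n n"
  shows "lagrangian (Suc n) \<pi> w X Z \<nu> \<mu> = - ln (det X) + mtrace (Z * X) - \<nu>
     + (\<Sum>(a, b)\<in>pairs (Suc n). w a b * (\<nu> - \<mu> a b - bt_lambda \<pi> a b * farris (Suc n) Z $$ (a, b)))"
proof -
  let ?M = "red_info_mat (Suc n) \<pi> w"
  have Zc: "Z \<in> carrier_mat n n" using Z by (simp add: sym_mats_def)
  have M: "?M \<in> carrier_mat n n" using red_info_mat_carrier[of "Suc n"] by simp
  have "mtrace (Z * (X - ?M)) = mtrace (Z * X) - mtrace (Z * ?M)"
    unfolding mtrace_mult[OF Zc minus_carrier_mat[OF M]] mtrace_mult[OF Zc X] mtrace_mult[OF Zc M]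
    using X M by (simp add: right_diff_distrib sum_subtractf)
  then show ?thesis
    unfolding lagrangian_def mtrace_mult_red_info_mat[OF Zc sym_mats_entry_sym[OF Z]]
    by (simp add: split_def sum_subtractf sum_distrib_left sum.distrib algebra_simps)
qed

section \<open>The dual function\<close>

lemma dual_function_le_lagrangian:
  "X \<in> pd_mats (m - 1) \<Longrightarrow> dual_function m \<pi> Z \<nu> \<mu> \<le> ereal (lagrangian m \<pi> w X Z \<nu> \<mu>)"
  unfolding dual_function_def by (intro INF_lower2[of "(w, X)"]) auto

lemma dual_function_eq_minf_of_neg_coeff:
  assumes Z: "Z \<in> sym_mats n" and uv: "(u, v) \<in> pairs (Suc n)" and "\<mu> u v \<ge> 0"
    and "\<nu> < bt_lambda \<pi> u v * farris (Suc n) Z $$ (u, v)"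
  shows "dual_function (Suc n) \<pi> Z \<nu> \<mu> = -\<infinity>"
proof (rule ereal_bot)
  fix B
  define c where "c = \<nu> - \<mu> u v - bt_lambda \<pi> u v * farris (Suc n) Z $$ (u, v)"
  have c: "c < 0" using assms unfolding c_def by simp
  define L0 where "L0 = - ln (det (1\<^sub>m n)) + mtrace (Z * 1\<^sub>m n) - \<nu>"
  define w where "w = (\<lambda>a b. if a = u \<and> b = v then (B - L0) / c else (0::real))"
  have "(\<Sum>(a, b)\<in>pairs (Suc n). w a b * (\<nu> - \<mu> a b - bt_lambda \<pi> a b * farris (Suc n) Z $$ (a, b)))
      = (\<Sum>(a, b)\<in>pairs (Suc n). if a = u \<and> b = v then (B - L0) / c * c else 0)"
    unfolding w_def c_def by (intro sum.cong refl) auto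
  also have "\<dots> = B - L0" unfolding sum_pairs_delta using uv c by (simp add: pairs_def)
  finally have "lagrangian (Suc n) \<pi> w (1\<^sub>m n) Z \<nu> \<mu> = B"
    unfolding lagrangian_eq[OF Z one_carrier_mat] L0_def by simp
  then show "dual_function (Suc n) \<pi> Z \<nu> \<mu> \<le> ereal B"
    using dual_function_le_lagrangian[of "1\<^sub>m n" "Suc n" \<pi> Z \<nu> \<mu> w] one_mem_pd_mats by simp
qed

lemma dual_function_le_ln_det:
  assumes Z: "Z \<in> pd_mats n"
  shows "dual_function (Suc n) \<pi> Z \<nu> \<mu> \<le> ereal (ln (det Z) + real n - \<nu>)"
proof -
  obtain B where B: "B \<in> pd_mats n" and ZB: "Z * B = 1\<^sub>m n" using pd_mats_inverse[OF Z] .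
  have "det Z * det B = 1" using det_mult[OF pd_mats_carrier[OF Z] pd_mats_carrier[OF B]] ZB by simp
  then have "det B = 1 / det Z" using pd_mats_det_pos[OF Z] by (simp add: field_simps)
  then have "- ln (det B) = ln (det Z)" using pd_mats_det_pos[OF Z] by (simp add: ln_div)
  moreover have "mtrace (Z * B) = real n" unfolding ZB mtrace_def by simp
  moreover have "Z \<in> sym_mats n" using Z by (simp add: pd_mats_def)
  ultimately have "lagrangian (Suc n) \<pi> (\<lambda>a b. 0) B Z \<nu> \<mu> = ln (det Z) + real n - \<nu>"
    using lagrangian_eq[OF _ pd_mats_carrier[OF B]] by simp
  then show ?thesis using dual_function_le_lagrangian[of B "Suc n" \<pi> Z \<nu> \<mu> "\<lambda>a b. 0"] B by simp
qed

lemma ln_det_le_dual_function: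
  assumes Z: "Z \<in> pd_mats n"
    and coeff: "\<forall>(a, b)\<in>pairs (Suc n). \<nu> - \<mu> a b = bt_lambda \<pi> a b * farris (Suc n) Z $$ (a, b)"
  shows "ereal (ln (det Z) + real n - \<nu>) \<le> dual_function (Suc n) \<pi> Z \<nu> \<mu>"
  unfolding dual_function_def
proof (rule INF_greatest, clarify)
  fix w X assume X: "X \<in> pd_mats (Suc n - 1)"
  then have X: "X \<in> pd_mats n" by simp
  have "(\<Sum>(a, b)\<in>pairs (Suc n). w a b * (\<nu> - \<mu> a b - bt_lambda \<pi> a b * farris (Suc n) Z $$ (a, b))) = 0"
    using coeff by (intro sum.neutral) auto
  then have "lagrangian (Suc n) \<pi> w X Z \<nu> \<mu> = - ln (det X) + mtrace (Z * X) - \<nu>"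
    using lagrangian_eq[OF _ pd_mats_carrier[OF X]] Z by (simp add: pd_mats_def)
  then show "ereal (ln (det Z) + real n - \<nu>) \<le> ereal (lagrangian (Suc n) \<pi> (fst (w, X)) (snd (w, X)) Z \<nu> \<mu>)"
    using ln_det_add_ln_det_le_mtrace_mult[OF Z X] by simp
qed

text \<open>X = U U', where U is the identity with column k replaced by sqrt t y; U is upper
  triangular because y vanishes beyond k.\<close>
lemma rank_one_update_mem_pd_mats:
  fixes y :: "nat \<Rightarrow> real"
  assumes k: "k < n" "y k \<noteq> 0" and above_k: "\<And>j. j < n \<Longrightarrow> k < j \<Longrightarrow> y j = 0" and "t > 0"
  defines "X \<equiv> mat n n (\<lambda>(i, j). t * y i * y j + (if i = j \<and> i \<noteq> k then 1 else 0))"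
  shows "X \<in> pd_mats n" and "det X = t * (y k)\<^sup>2"
proof -
  define U where "U = mat n n (\<lambda>(i, j). if j = k then sqrt t * y i else if i = j then 1 else 0)"
  have U: "U \<in> carrier_mat n n" unfolding U_def by simp
  have U_upper: "upper_triangular U" using above_k by (auto simp: U_def)
  have "(\<Prod>i<n. U $$ (i, i)) = (\<Prod>i<n. if i = k then sqrt t * y k else 1)"
    by (intro prod.cong refl) (simp add: U_def)
  then have diag: "(\<Prod>i<n. U $$ (i, i)) = sqrt t * y k" using k(1) by simp
  have sqrt_t: "sqrt t * a * (sqrt t * b) = t * a * b" for a b
    using \<open>t > 0\<close> by (simp add: mult_ac flip: power2_eq_square)
  have "(U * transpose_mat U) $$ (i, j) = X $$ (i, j)" if "i < n" "j < n" for i j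
  proof -
    have "(U * transpose_mat U) $$ (i, j) = (\<Sum>l<n. U $$ (i, l) * U $$ (j, l))"
      using that U by (simp add: scalar_prod_def atLeast0LessThan)
    also have "\<dots> = (\<Sum>l<n. (if l = k then t * y i * y j else 0)
        + (if l = i then (if i = j \<and> i \<noteq> k then 1 else 0) else 0))"
      using that by (intro sum.cong refl) (auto simp: U_def sqrt_t)
    finally show ?thesis using that k(1) by (simp add: sum.distrib X_def)
  qed
  then have X: "X = U * transpose_mat U" using U by (intro eq_matI) (auto simp: X_def)
  show "X \<in> pd_mats n"
    unfolding X using U diag det_upper_triangular_prod[OF U_upper U] \<open>t > 0\<close> k(2)
    by (intro gram_mem_pd_mats) auto
  show "det X = t * (y k)\<^sup>2"
    unfolding X det_mult_transpose_upper_triangular[OF U_upper U] diag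
    using \<open>t > 0\<close> by (simp add: power_mult_distrib)
qed

lemma not_pd_witness:
  assumes Z: "Z \<in> sym_mats n" and not_pd: "Z \<notin> pd_mats n"
  obtains k y where "k < n" "y k \<noteq> 0" "\<And>j. j < n \<Longrightarrow> k < j \<Longrightarrow> y j = 0"
    "quad_form n (\<lambda>i j. Z $$ (i, j)) y \<le> 0"
proof -
  have Zc: "Z \<in> carrier_mat n n" using Z by (simp add: sym_mats_def)
  obtain x where x: "x \<in> carrier_vec n" "x \<noteq> 0\<^sub>v n" "\<not> x \<bullet> (Z *\<^sub>v x) > 0"
    using Z not_pd unfolding pd_mats_def by auto
  define y where "y = (\<lambda>i. x $ i)"
  have q: "quad_form n (\<lambda>i j. Z $$ (i, j)) y \<le> 0"
    using x(3) scalar_prod_mult_mat_vec_eq_quad_form[OF Zc x(1)] unfolding y_def by simp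
  define S where "S = {i. i < n \<and> y i \<noteq> 0}"
  have "S \<noteq> {}"
  proof
    assume "S = {}"
    then have "x = 0\<^sub>v n" using x(1) unfolding S_def y_def by (intro eq_vecI) auto
    then show False using x(2) by simp
  qed
  moreover have "finite S" unfolding S_def by simp
  ultimately have "Max S \<in> S" by (rule Max_in[rotated])
  moreover have "y j = 0" if "j < n" "Max S < j" for j
    using Max_ge[OF \<open>finite S\<close>, of j] that unfolding S_def by fastforce
  ultimately show ?thesis using that q unfolding S_def by blast
qed

lemma dual_function_eq_minf_of_not_pd:
  assumes Z: "Z \<in> sym_mats n" and not_pd: "Z \<notin> pd_mats n"
  shows "dual_function (Suc n) \<pi> Z \<nu> \<mu> = -\<infinity>"
proof -
  have Zc: "Z \<in> carrier_mat n n" using Z by (simp add: sym_mats_def)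
  obtain k y where k: "k < n" "y k \<noteq> 0" and above_k: "\<And>j. j < n \<Longrightarrow> k < j \<Longrightarrow> y j = 0"
    and q: "quad_form n (\<lambda>i j. Z $$ (i, j)) y \<le> 0"
    using not_pd_witness[OF Z not_pd] by blast
  define c0 where "c0 = (\<Sum>i<n. if i = k then 0 else Z $$ (i, i))"
  show ?thesis
  proof (rule ereal_bot)
    fix B
    define t where "t = exp (- ln ((y k)\<^sup>2) + c0 - \<nu> - B)"
    have t: "t > 0" unfolding t_def by simp
    define X where "X = mat n n (\<lambda>(i, j). t * y i * y j + (if i = j \<and> i \<noteq> k then 1 else 0))"
    have X: "X \<in> pd_mats n" and "det X = t * (y k)\<^sup>2"
      using rank_one_update_mem_pd_mats[of k n y t] k above_k t unfolding X_def by blast+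
    then have ln_det_X: "ln (det X) = ln t + ln ((y k)\<^sup>2)" using t k(2) by (simp add: ln_mult)
    have "mtrace (Z * X) = (\<Sum>i<n. \<Sum>j<n. t * (y i * Z $$ (i, j) * y j)
        + (if j = i then (if i = k then 0 else Z $$ (i, i)) else 0))"
      unfolding mtrace_mult[OF Zc pd_mats_carrier[OF X]]
      by (intro sum.cong refl) (auto simp: X_def algebra_simps)
    also have "\<dots> = t * quad_form n (\<lambda>i j. Z $$ (i, j)) y + c0"
      unfolding quad_form_def c0_def by (simp add: sum.distrib sum_distrib_left)
    finally have "lagrangian (Suc n) \<pi> (\<lambda>a b. 0) X Z \<nu> \<mu> = B + t * quad_form n (\<lambda>i j. Z $$ (i, j)) y"
      unfolding lagrangian_eq[OF Z pd_mats_carrier[OF X]] ln_det_X t_def by simp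
    also have "\<dots> \<le> B" using t q by (simp add: mult_nonneg_nonpos)
    finally show "dual_function (Suc n) \<pi> Z \<nu> \<mu> \<le> ereal B"
      using dual_function_le_lagrangian[of X "Suc n" \<pi> Z \<nu> \<mu> "\<lambda>a b. 0"] X
      by (simp add: order_trans)
  qed
qed

section \<open>The simplified dual problem\<close>

lemma smult_mem_pd_mats:
  assumes "c > 0" and Z: "Z \<in> pd_mats n"
  shows "c \<cdot>\<^sub>m Z \<in> pd_mats n"
proof -
  have Zc: "Z \<in> carrier_mat n n" and pos: "pos_def n (\<lambda>i j. Z $$ (i, j))"
    using Z by (simp_all add: pd_mats_iff)
  have "quad_form n (\<lambda>i j. (c \<cdot>\<^sub>m Z) $$ (i, j)) y = c * quad_form n (\<lambda>i j. Z $$ (i, j)) y" for y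
    unfolding quad_form_def sum_distrib_left using Zc by (intro sum.cong refl) (simp add: mult_ac)
  then have "pos_def n (\<lambda>i j. (c \<cdot>\<^sub>m Z) $$ (i, j))"
    using pos \<open>c > 0\<close> Zc unfolding pos_def_def by auto
  then show ?thesis using Zc by (simp add: pd_mats_iff)
qed

lemma farris_smult:
  assumes "Z \<in> carrier_mat n n"
  shows "farris (Suc n) (c \<cdot>\<^sub>m Z) = c \<cdot>\<^sub>m farris (Suc n) Z"
  using assms by (intro eq_matI) (auto simp: farris_def algebra_simps)

lemma farris_le_Gamma_bar:
  assumes pos: "\<And>i. i < Suc n \<Longrightarrow> \<pi> i > 0" and Z: "Z \<in> sym_mats n"
    and le: "\<forall>(a, b)\<in>pairs (Suc n). bt_lambda \<pi> a b * farris (Suc n) Z $$ (a, b) \<le> real n"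
  shows "\<forall>u<Suc n. \<forall>v<Suc n. farris (Suc n) Z $$ (u, v) \<le> Gamma_bar (Suc n) \<pi> $$ (u, v)"
proof (intro allI impI)
  fix u v assume uv: "u < Suc n" "v < Suc n"
  have sym: "farris (Suc n) Z $$ (a, b) = farris (Suc n) Z $$ (b, a)" if "a < Suc n" "b < Suc n" for a b
    using that zero_pad_sym[OF sym_mats_entry_sym[OF Z]] by (simp add: farris_entry)
  have le': "farris (Suc n) Z $$ (a, b) \<le> real n / bt_lambda \<pi> a b" if "a < b" "b < Suc n" for a b
    using le that bt_lambda_pos[OF pos[of a] pos[of b]] by (auto simp: pairs_def field_simps)
  consider "u = v" | "u < v" | "v < u" by linarith
  then show "farris (Suc n) Z $$ (u, v) \<le> Gamma_bar (Suc n) \<pi> $$ (u, v)"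
    by cases (use uv le'[of u v] le'[of v u] sym[OF uv] bt_lambda_sym[of \<pi> u v] in
        \<open>auto simp: farris_def Gamma_bar_def\<close>)
qed

lemma ln_det_le_simplified_dual_value:
  assumes Z: "Z \<in> pd_mats n"
    and le: "\<forall>u<Suc n. \<forall>v<Suc n. farris (Suc n) Z $$ (u, v) \<le> Gamma_bar (Suc n) \<pi> $$ (u, v)"
  shows "ereal (ln (det Z)) \<le> simplified_dual_value (Suc n) \<pi>"
proof -
  have "logdet (bordered (Suc n) (farris (Suc n) Z)) = ereal (ln (det Z))"
    using det_bordered_farris[OF pd_mats_carrier[OF Z]] pd_mats_det_pos[OF Z] by (simp add: logdet_def)
  moreover have "logdet (bordered (Suc n) (farris (Suc n) Z)) \<le> simplified_dual_value (Suc n) \<pi>"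
    unfolding simplified_dual_value_def using farris_mem_CND_cone[OF Z] le by (intro SUP_upper) auto
  ultimately show ?thesis by simp
qed

text \<open>As a function of c > 0, ln det (c Z) + n - c nu = n ln c + ln det Z + n - c nu is maximal
  at c = n / nu.\<close>
lemma ln_det_add_le_ln_det_smult:
  assumes Z: "Z \<in> pd_mats n" and "\<nu> > 0" and "n \<ge> 1"
  shows "ln (det Z) + real n - \<nu> \<le> ln (det ((real n / \<nu>) \<cdot>\<^sub>m Z))"
proof -
  have "ln (\<nu> / real n) \<le> \<nu> / real n - 1" using assms by (intro ln_le_minus_one) simp
  then have "real n * ln (\<nu> / real n) \<le> \<nu> - real n"
    using \<open>n \<ge> 1\<close> mult_left_mono[of _ _ "real n"] by (simp add: field_simps)
  moreover have "ln (det ((real n / \<nu>) \<cdot>\<^sub>m Z)) = - real n * ln (\<nu> / real n) + ln (det Z)"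
    using assms pd_mats_carrier[OF Z] pd_mats_det_pos[OF Z] by (simp add: ln_mult ln_realpow ln_div algebra_simps)
  ultimately show ?thesis by simp
qed

lemma dual_function_le_simplified_dual_value:
  assumes "n \<ge> 1" and pos: "\<And>i. i < Suc n \<Longrightarrow> \<pi> i > 0" and Z: "Z \<in> pd_mats n"
    and le: "\<forall>(a, b)\<in>pairs (Suc n). bt_lambda \<pi> a b * farris (Suc n) Z $$ (a, b) \<le> \<nu>"
  shows "dual_function (Suc n) \<pi> Z \<nu> \<mu> \<le> simplified_dual_value (Suc n) \<pi>"
proof -
  have Zc: "Z \<in> carrier_mat n n" by (rule pd_mats_carrier[OF Z])
  have "Z $$ (0, 0) > 0"
    using Z \<open>n \<ge> 1\<close> pos_def_diag_pos[of n "\<lambda>i j. Z $$ (i, j)" 0] by (simp add: pd_mats_iff)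
  moreover have "farris (Suc n) Z $$ (0, n) = Z $$ (0, 0)" using \<open>n \<ge> 1\<close> by (simp add: farris_def)
  ultimately have "bt_lambda \<pi> 0 n * farris (Suc n) Z $$ (0, n) > 0"
    using bt_lambda_pos[OF pos[of 0] pos[of n]] by simp
  moreover have "bt_lambda \<pi> 0 n * farris (Suc n) Z $$ (0, n) \<le> \<nu>"
    using le \<open>n \<ge> 1\<close> by (simp add: pairs_def)
  ultimately have "\<nu> > 0" by linarith
  define c where "c = real n / \<nu>"
  have c: "c > 0" using \<open>n \<ge> 1\<close> \<open>\<nu> > 0\<close> unfolding c_def by simp
  have Z': "c \<cdot>\<^sub>m Z \<in> pd_mats n" by (rule smult_mem_pd_mats[OF c Z])
  have "\<forall>(a, b)\<in>pairs (Suc n). bt_lambda \<pi> a b * farris (Suc n) (c \<cdot>\<^sub>m Z) $$ (a, b) \<le> real n"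
  proof clarify
    fix a b assume ab: "(a, b) \<in> pairs (Suc n)"
    then have "c * (bt_lambda \<pi> a b * farris (Suc n) Z $$ (a, b)) \<le> c * \<nu>"
      using le c by (intro mult_left_mono) auto
    then show "bt_lambda \<pi> a b * farris (Suc n) (c \<cdot>\<^sub>m Z) $$ (a, b) \<le> real n"
      using ab \<open>\<nu> > 0\<close> unfolding farris_smult[OF Zc] c_def
      by (auto simp: pairs_def mult_ac farris_carrier[THEN carrier_matD(1)] farris_carrier[THEN carrier_matD(2)])
  qed
  then have "ereal (ln (det (c \<cdot>\<^sub>m Z))) \<le> simplified_dual_value (Suc n) \<pi>"
    using farris_le_Gamma_bar[OF pos] Z' ln_det_le_simplified_dual_value[OF Z']
    by (simp add: pd_mats_def)
  moreover have "dual_function (Suc n) \<pi> Z \<nu> \<mu> \<le> ereal (ln (det (c \<cdot>\<^sub>m Z)))"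
    using dual_function_le_ln_det[OF Z, of \<pi> \<nu> \<mu>] ln_det_add_le_ln_det_smult[OF Z \<open>\<nu> > 0\<close> \<open>n \<ge> 1\<close>]
    unfolding c_def by (simp add: order_trans)
  ultimately show ?thesis by (rule order_trans[rotated])
qed

lemma lagrange_dual_value_le_simplified_dual_value:
  assumes "n \<ge> 1" and pos: "\<And>i. i < Suc n \<Longrightarrow> \<pi> i > 0"
  shows "lagrange_dual_value (Suc n) \<pi> \<le> simplified_dual_value (Suc n) \<pi>"
  unfolding lagrange_dual_value_def
proof (rule SUP_least, clarify)
  fix Z :: "real mat" and \<nu> :: real and \<mu> :: "nat \<Rightarrow> nat \<Rightarrow> real"
  assume Z: "Z \<in> sym_mats (Suc n - 1)" and \<mu>: "\<forall>(u, v)\<in>pairs (Suc n). 0 \<le> \<mu> u v"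
  then have Z: "Z \<in> sym_mats n" by simp
  consider (neg_coeff) u v where "(u, v) \<in> pairs (Suc n)" "\<nu> < bt_lambda \<pi> u v * farris (Suc n) Z $$ (u, v)"
    | (not_pd) "Z \<notin> pd_mats n"
    | (pd) "Z \<in> pd_mats n" "\<forall>(a, b)\<in>pairs (Suc n). bt_lambda \<pi> a b * farris (Suc n) Z $$ (a, b) \<le> \<nu>"
    by fastforce
  then show "dual_function (Suc n) \<pi> (fst (Z, \<nu>, \<mu>)) (fst (snd (Z, \<nu>, \<mu>))) (snd (snd (Z, \<nu>, \<mu>)))
      \<le> simplified_dual_value (Suc n) \<pi>"
  proof cases
    case neg_coeff
    then show ?thesis using dual_function_eq_minf_of_neg_coeff[OF Z] \<mu> by fastforce
  next
    case not_pd
    then show ?thesis using dual_function_eq_minf_of_not_pd[OF Z] by simp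
  next
    case pd
    then show ?thesis using dual_function_le_simplified_dual_value[OF \<open>n \<ge> 1\<close> pos] by simp
  qed
qed

lemma simplified_dual_value_le_lagrange_dual_value:
  assumes pos: "\<And>i. i < Suc n \<Longrightarrow> \<pi> i > 0"
  shows "simplified_dual_value (Suc n) \<pi> \<le> lagrange_dual_value (Suc n) \<pi>"
  unfolding simplified_dual_value_def
proof (rule SUP_least, clarify)
  fix G assume G: "G \<in> CND_cone (Suc n)"
    and le: "\<forall>u<Suc n. \<forall>v<Suc n. G $$ (u, v) \<le> Gamma_bar (Suc n) \<pi> $$ (u, v)"
  obtain Z where Z: "Z \<in> pd_mats n" and G_eq: "farris (Suc n) Z = G" using CND_cone_farris[OF G] .
  \<comment> \<open>The multipliers nu = n and mu = n - lambda G make the Lagrangian independent of the design;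
    mu is nonnegative exactly because G is below Gamma-bar.\<close>
  define \<mu> where "\<mu> = (\<lambda>a b. real n - bt_lambda \<pi> a b * G $$ (a, b))"
  have \<mu>: "\<forall>(a, b)\<in>pairs (Suc n). 0 \<le> \<mu> a b"
  proof clarify
    fix a b assume ab: "(a, b) \<in> pairs (Suc n)"
    then have "G $$ (a, b) \<le> Gamma_bar (Suc n) \<pi> $$ (a, b)" using le by (auto simp: pairs_def)
    also have "\<dots> = real n / bt_lambda \<pi> a b" using ab by (simp add: pairs_def Gamma_bar_def)
    finally have "G $$ (a, b) \<le> real n / bt_lambda \<pi> a b" .
    then show "0 \<le> \<mu> a b"
      using ab bt_lambda_pos[OF pos[of a] pos[of b]] by (auto simp: \<mu>_def pairs_def field_simps)
  qed
  have "logdet (bordered (Suc n) G) = ereal (ln (det Z) + real n - real n)"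
    using det_bordered_farris[OF pd_mats_carrier[OF Z]] pd_mats_det_pos[OF Z] G_eq by (simp add: logdet_def)
  also have "\<dots> \<le> dual_function (Suc n) \<pi> Z (real n) \<mu>"
    using G_eq by (intro ln_det_le_dual_function[OF Z]) (simp add: \<mu>_def)
  also have "\<dots> \<le> lagrange_dual_value (Suc n) \<pi>"
    unfolding lagrange_dual_value_def using Z \<mu>
    by (intro SUP_upper2[of "(Z, real n, \<mu>)"]) (auto simp: pd_mats_def)
  finally show "logdet (bordered (Suc n) G) \<le> lagrange_dual_value (Suc n) \<pi>" .
qed

theorem corollary4p1:
  fixes m :: nat and \<pi> :: "nat \<Rightarrow> real"
  assumes "m \<ge> 2" and "\<And>i. i < m \<Longrightarrow> \<pi> i > 0"
  shows "lagrange_dual_value m \<pi> = simplified_dual_value m \<pi>"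
proof -
  obtain n where m: "m = Suc n" and "n \<ge> 1" using assms(1) by (cases m) auto
  have pos: "\<And>i. i < Suc n \<Longrightarrow> \<pi> i > 0" using assms(2) m by simp
  show ?thesis
    unfolding m using lagrange_dual_value_le_simplified_dual_value[OF \<open>n \<ge> 1\<close> pos]
      simplified_dual_value_le_lagrange_dual_value[OF pos] by (rule antisym)
qed

end
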